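(* Let $R$ be an associative ring with identity, let $a,b,c,y\in R$ and suppose $t=cab$ is regular. Then the following are equivalent: (i) $y$ is the $(b,c)$-inverse of $a$; (ii) $y$ is a hybrid $(b,c)$-inverse of $a$; (iii) $y$ is an annihilator $(b,c)$-inverse of $a$.
   Context: For $a,b,c\in R$, $y$ is the $(b,c)$-inverse of $a$ if $y\in (bRy)\cap(yRc)$, $yab=b$ and $cay=c$ (such $y$ is unique). $y$ is a hybrid $(b,c)$-inverse of $a$ if $yay=y$, $yR=bR$ and $r(y)=r(c)$. $y$ is an annihilator $(b,c)$-inverse of $a$ if $yay=y$, $l(y)=l(b)$ and $r(y)=r(c)$. Here $l(x)=\{z\in R:zx=0\}$, $r(x)=\{z\in R:xz=0\}$, $xR=\{xz:z\in R\}$. An element is regular if $x=xzx$ for some $z\in R$. *)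

theory Defs
  imports Main
begin

definition lann :: "'a::ring_1 \<Rightarrow> 'a set" where
  "lann x = {z. z * x = 0}"

definition rann :: "'a::ring_1 \<Rightarrow> 'a set" where
  "rann x = {z. x * z = 0}"

definition rideal :: "'a::ring_1 \<Rightarrow> 'a set" where
  "rideal x = {x * z | z. True}"

definition regular :: "'a::ring_1 \<Rightarrow> bool" where
  "regular x \<longleftrightarrow> (\<exists>z. x = x * z * x)"

definition bc_inverse :: "'a::ring_1 \<Rightarrow> 'a \<Rightarrow> 'a \<Rightarrow> 'a \<Rightarrow> bool" where
  "bc_inverse a b c y \<longleftrightarrow>
     (\<exists>r. y = b * r * y) \<and> (\<exists>s. y = y * s * c) \<and> y * a * b = b \<and> c * a * y = c"

definition hybrid_bc_inverse :: "'a::ring_1 \<Rightarrow> 'a \<Rightarrow> 'a \<Rightarrow> 'a \<Rightarrow> bool" where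
  "hybrid_bc_inverse a b c y \<longleftrightarrow>
     y * a * y = y \<and> rideal y = rideal b \<and> rann y = rann c"

definition annihilator_bc_inverse :: "'a::ring_1 \<Rightarrow> 'a \<Rightarrow> 'a \<Rightarrow> 'a \<Rightarrow> bool" where
  "annihilator_bc_inverse a b c y \<longleftrightarrow>
     y * a * y = y \<and> lann y = lann b \<and> rann y = rann c"

end

theory Submission
  imports Defs
begin

text \<open>
  All three notions say that \<open>y\<close> is an outer inverse of \<open>a\<close> "with left side \<open>b\<close> and right
  side \<open>c\<close>"; they differ only in how strongly \<open>b\<close> and \<open>c\<close> are tied to \<open>y\<close>. The weakest
  form, equal annihilators, already lets equations \<open>p y = q y\<close> be transported to
  \<open>p b = q b\<close> (and dually for \<open>c\<close>). Taking an inner inverse \<open>x\<close> of \<open>t = cab\<close>, such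
  transports give \<open>b x c a b = b\<close> and \<open>c a b x c = c\<close>, hence \<open>y = b (xca) y\<close> and
  \<open>y = y (abx) c\<close>, which are the membership conditions of the \<open>(b,c)\<close>-inverse.
\<close>

lemma rideal_subset_iff: "rideal x \<subseteq> rideal y \<longleftrightarrow> (\<exists>u. x = y * u)"
proof
  assume "rideal x \<subseteq> rideal y"
  moreover have "x \<in> rideal x" unfolding rideal_def by (auto intro: exI[of _ 1])
  ultimately show "\<exists>u. x = y * u" unfolding rideal_def by auto
next
  assume "\<exists>u. x = y * u"
  then show "rideal x \<subseteq> rideal y" unfolding rideal_def by (auto simp: mult.assoc)
qed

lemma lann_antimono_rideal:
  assumes "rideal x \<subseteq> rideal y" shows "lann y \<subseteq> lann x"
proof -
  obtain u where "x = y * u" using assms rideal_subset_iff by blast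
  then show ?thesis unfolding lann_def by (auto simp: mult.assoc[symmetric])
qed

lemma rann_antimono_left_multiple:
  assumes "x = u * y" shows "rann y \<subseteq> rann x"
  using assms unfolding rann_def by (auto simp: mult.assoc)

lemma lann_subset_cancel:
  assumes "lann y \<subseteq> lann b" and "p * y = q * y"
  shows "p * b = q * b"
proof -
  have "p - q \<in> lann y" using assms(2) unfolding lann_def by (simp add: left_diff_distrib)
  then have "(p - q) * b = 0" using assms(1) unfolding lann_def by blast
  then show ?thesis by (simp add: left_diff_distrib)
qed

lemma rann_subset_cancel:
  assumes "rann y \<subseteq> rann c" and "y * p = y * q"
  shows "c * p = c * q"
proof -
  have "p - q \<in> rann y" using assms(2) unfolding rann_def by (simp add: right_diff_distrib)
  then have "c * (p - q) = 0" using assms(1) unfolding rann_def by blast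
  then show ?thesis by (simp add: right_diff_distrib)
qed

lemma bc_inverse_imp_hybrid:
  assumes "bc_inverse a b c y" shows "hybrid_bc_inverse a b c y"
proof -
  obtain r s where r: "y = b * r * y" and s: "y = y * s * c"
    and yab: "y * a * b = b" and cay: "c * a * y = c"
    using assms unfolding bc_inverse_def by blast
  have "y * a * y = y * a * b * r * y" using r by (metis mult.assoc)
  also have "\<dots> = y" using yab r by simp
  finally have "y * a * y = y" .
  moreover have "rideal y = rideal b"
    using r yab by (metis rideal_subset_iff subset_antisym mult.assoc)
  moreover have "rann y = rann c"
    using rann_antimono_left_multiple[OF cay[symmetric]] rann_antimono_left_multiple[OF s]
    by blast
  ultimately show ?thesis unfolding hybrid_bc_inverse_def by blast
qed

lemma hybrid_imp_annihilator:
  assumes "hybrid_bc_inverse a b c y" shows "annihilator_bc_inverse a b c y"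
  using assms lann_antimono_rideal[of y b] lann_antimono_rideal[of b y]
  unfolding hybrid_bc_inverse_def annihilator_bc_inverse_def by auto

lemma annihilator_imp_bc_inverse:
  assumes "regular (c * a * b)" and "annihilator_bc_inverse a b c y"
  shows "bc_inverse a b c y"
proof -
  have yay: "y * a * y = y" and lb: "lann y \<subseteq> lann b" and ly: "lann b \<subseteq> lann y"
    and rc: "rann y \<subseteq> rann c" and ry: "rann c \<subseteq> rann y"
    using assms(2) unfolding annihilator_bc_inverse_def by auto
  obtain x where x: "c * a * b * x * (c * a * b) = c * a * b"
    using assms(1) unfolding regular_def by metis
  have yab: "y * a * b = b"
    using lann_subset_cancel[OF lb, of "y * a" 1] yay by simp
  have cay: "c * a * y = c"
    using rann_subset_cancel[OF rc, of "a * y" 1] yay by (simp add: mult.assoc)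
  have "y * (a * b * x * c * a * b) = y * (a * b)"
    using rann_subset_cancel[OF ry, of "a * b * x * c * a * b" "a * b"] x
    by (simp add: mult.assoc)
  then have "b * x * c * a * b = b" using yab by (simp add: mult.assoc[symmetric])
  then have r: "y = b * (x * c * a) * y"
    using lann_subset_cancel[OF ly, of "b * x * c * a" 1] by (simp add: mult.assoc)
  have "c * a * b * x * c * a * y = c * a * y"
    using lann_subset_cancel[OF ly, of "c * a * b * x * c * a" "c * a"] x
    by (simp add: mult.assoc)
  then have "c * a * b * x * c = c" using cay by (simp add: mult.assoc)
  then have s: "y = y * (a * b * x) * c"
    using rann_subset_cancel[OF ry, of "a * b * x * c" 1] by (simp add: mult.assoc)
  show ?thesis unfolding bc_inverse_def using r s yab cay by blast
qed

theorem theorem3p10: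
  fixes a b c y :: "'a::ring_1"
  assumes "regular (c * a * b)"
  shows "(bc_inverse a b c y \<longleftrightarrow> hybrid_bc_inverse a b c y) \<and>
         (hybrid_bc_inverse a b c y \<longleftrightarrow> annihilator_bc_inverse a b c y)"
  using bc_inverse_imp_hybrid hybrid_imp_annihilator annihilator_imp_bc_inverse[OF assms]
  by blast

end
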